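(* Let $r\ge2$, $d\in\{1,\dots,r-1\}$ and let $M\in\mathrm{rep}_{\mathrm{proj}}(K_r,d)$ with $\Delta_M(d)>d(r-d)$. Then there exist $a\in\mathbb N$ (a positive integer) and an exact sequence $(0)\to aP_0(r)\to M\to M_{\min}\to(0)$ in $\mathrm{rep}(K_r)$, where $M_{\min}\in\mathrm{rep}_{\mathrm{proj}}(K_r,d)$ and $\Delta_{M_{\min}}(d)=d(r-d)$.
   Context: $k$ algebraically closed of arbitrary characteristic; vector spaces finite-dimensional. $K_r$: Kronecker quiver with arrows $\gamma_1,\dots,\gamma_r:1\to2$; $A_r=\bigoplus_ik\gamma_i$; for $M=(M_1,M_2,(M(\gamma_i))_i)$, $\psi_M:A_r\otimes_kM_1\to M_2$, $\gamma_i\otimes m\mapsto M(\gamma_i)(m)$; $\Delta_M(d)=\dim_kM_2-d\dim_kM_1$. $\mathrm{rep}_{\mathrm{proj}}(K_r,d)$ is the full subcategory of $M$ with $\psi_M|_{\mathfrak v\otimes M_1}$ injective for every $d$-dimensional subspace $\mathfrak v\subseteq A_r$. $P_0(r)=(0,k)$ is the simple projective representation. *)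

theory Defs
  imports Main "HOL.Vector_Spaces" "HOL-Library.Function_Algebras"
begin

class alg_closed_field = field +
  assumes alg_closed: "\<And>(n::nat) (c::nat \<Rightarrow> 'a). n > 0 \<Longrightarrow> \<exists>x. x ^ n + (\<Sum>i<n. c i * x ^ i) = 0"

(* coordinate vectors: k^n = functions nat => k vanishing from index n on *)
definition kvec :: "nat \<Rightarrow> (nat \<Rightarrow> 'k::zero) set" where
  "kvec n = {v. \<forall>i\<ge>n. v i = 0}"

definition sc :: "'k::field \<Rightarrow> (nat \<Rightarrow> 'k) \<Rightarrow> (nat \<Rightarrow> 'k)" where
  "sc c v = (\<lambda>i. c * v i)"

definition sc2 :: "'k::field \<Rightarrow> (nat \<Rightarrow> nat \<Rightarrow> 'k) \<Rightarrow> (nat \<Rightarrow> nat \<Rightarrow> 'k)" where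
  "sc2 c t = (\<lambda>i j. c * t i j)"

definition matapp :: "nat \<Rightarrow> nat \<Rightarrow> (nat \<Rightarrow> nat \<Rightarrow> 'k::field) \<Rightarrow> (nat \<Rightarrow> 'k) \<Rightarrow> (nat \<Rightarrow> 'k)" where
  "matapp m n A v = (\<lambda>i. if i < m then (\<Sum>j<n. A i j * v j) else 0)"

(* a representation of K_r: M_1 = k^(dim1), M_2 = k^(dim2),
   M(gamma_(i+1)) given by the dim2 x dim1 matrix arr i, for i < r *)
record 'k krep =
  dim1 :: nat
  dim2 :: nat
  arr  :: "nat \<Rightarrow> nat \<Rightarrow> nat \<Rightarrow> 'k"

definition arrow :: "'k::field krep \<Rightarrow> nat \<Rightarrow> (nat \<Rightarrow> 'k) \<Rightarrow> (nat \<Rightarrow> 'k)" where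
  "arrow M i = matapp (dim2 M) (dim1 M) (arr M i)"

(* A_r (x) M_1 = k^r (x) k^(dim1): r x dim1 arrays; pure tensor a (x) m *)
definition tens :: "(nat \<Rightarrow> 'k::field) \<Rightarrow> (nat \<Rightarrow> 'k) \<Rightarrow> (nat \<Rightarrow> nat \<Rightarrow> 'k)" where
  "tens a m = (\<lambda>i j. a i * m j)"

(* psi_M : A_r (x) M_1 -> M_2, gamma_i (x) m |-> M(gamma_i)(m) *)
definition psi :: "nat \<Rightarrow> 'k::field krep \<Rightarrow> (nat \<Rightarrow> nat \<Rightarrow> 'k) \<Rightarrow> (nat \<Rightarrow> 'k)" where
  "psi r M t = (\<lambda>l. \<Sum>i<r. arrow M i (t i) l)"

definition tensor_sub :: "'k::field krep \<Rightarrow> (nat \<Rightarrow> 'k) set \<Rightarrow> (nat \<Rightarrow> nat \<Rightarrow> 'k) set" where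
  "tensor_sub M V = module.span sc2 {tens a m | a m. a \<in> V \<and> m \<in> kvec (dim1 M)}"

definition rep_proj :: "nat \<Rightarrow> nat \<Rightarrow> 'k::field krep \<Rightarrow> bool" where
  "rep_proj r d M \<longleftrightarrow>
     (\<forall>V. V \<subseteq> kvec r \<and> module.subspace sc V \<and> vector_space.dim sc V = d
          \<longrightarrow> inj_on (psi r M) (tensor_sub M V))"

definition Delta :: "'k krep \<Rightarrow> nat \<Rightarrow> int" where
  "Delta M d = int (dim2 M) - int d * int (dim1 M)"

definition aP0 :: "nat \<Rightarrow> 'k::zero krep" where
  "aP0 a = \<lparr>dim1 = 0, dim2 = a, arr = (\<lambda>_ _ _. 0)\<rparr>"

(* a morphism M -> N is a pair of matrices (F1, F2), F_v : M_v -> N_v *)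
type_synonym 'k kmor = "(nat \<Rightarrow> nat \<Rightarrow> 'k) \<times> (nat \<Rightarrow> nat \<Rightarrow> 'k)"

definition mor1 :: "'k::field krep \<Rightarrow> 'k krep \<Rightarrow> 'k kmor \<Rightarrow> (nat \<Rightarrow> 'k) \<Rightarrow> (nat \<Rightarrow> 'k)" where
  "mor1 M N f = matapp (dim1 N) (dim1 M) (fst f)"

definition mor2 :: "'k::field krep \<Rightarrow> 'k krep \<Rightarrow> 'k kmor \<Rightarrow> (nat \<Rightarrow> 'k) \<Rightarrow> (nat \<Rightarrow> 'k)" where
  "mor2 M N f = matapp (dim2 N) (dim2 M) (snd f)"

definition is_morph :: "nat \<Rightarrow> 'k::field krep \<Rightarrow> 'k krep \<Rightarrow> 'k kmor \<Rightarrow> bool" where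
  "is_morph r M N f \<longleftrightarrow>
     (\<forall>i<r. \<forall>x\<in>kvec (dim1 M). mor2 M N f (arrow M i x) = arrow N i (mor1 M N f x))"

definition short_exact :: "nat \<Rightarrow> 'k::field krep \<Rightarrow> 'k krep \<Rightarrow> 'k krep \<Rightarrow> 'k kmor \<Rightarrow> 'k kmor \<Rightarrow> bool" where
  "short_exact r L M N g h \<longleftrightarrow>
     is_morph r L M g \<and> is_morph r M N h \<and>
     inj_on (mor1 L M g) (kvec (dim1 L)) \<and> inj_on (mor2 L M g) (kvec (dim2 L)) \<and>
     mor1 L M g ` kvec (dim1 L) = {x \<in> kvec (dim1 M). mor1 M N h x = 0} \<and>
     mor2 L M g ` kvec (dim2 L) = {x \<in> kvec (dim2 M). mor2 M N h x = 0} \<and>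
     mor1 M N h ` kvec (dim1 M) = kvec (dim1 N) \<and>
     mor2 M N h ` kvec (dim2 M) = kvec (dim2 N)"

end

theory Submission
  imports Defs "HOL-Library.FuncSet"
begin

text \<open>
  Put \<open>a = \<Delta>\<^sub>M(d) - d(r - d)\<close>. It suffices to find an \<open>a\<close>-dimensional subspace \<open>U \<subseteq> M\<^sub>2\<close> that
  meets every \<open>\<psi>\<^sub>M(V \<otimes> M\<^sub>1)\<close>, \<open>V \<in> Gr\<^sub>d(A\<^sub>r)\<close>, only in \<open>0\<close>: then \<open>U\<close> is a subrepresentation
  \<open>aP\<^sub>0(r)\<close> of \<open>M\<close>, and the quotient \<open>M/U\<close> is still in \<open>rep\<^sub>p\<^sub>r\<^sub>o\<^sub>j(K\<^sub>r, d)\<close> with \<open>\<Delta> = d(r - d)\<close>.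

  \<open>U\<close> is built one vector at a time. While \<open>dim U < a\<close>, the vectors \<open>\<psi>\<^sub>M(t) + u\<close> with
  \<open>t \<in> V \<otimes> M\<^sub>1\<close> and \<open>u \<in> U\<close> are covered by finitely many polynomial maps, one for each affine
  chart of the Grassmannian, in \<open>d(r - d) + d dim M\<^sub>1 + dim U < dim M\<^sub>2\<close> variables. Over an
  infinite field such maps miss some point of \<open>M\<^sub>2\<close>: the coordinates of each map satisfy a
  nontrivial polynomial relation, because products of them outnumber the monomials in the
  variables, and a suitable point of the curve \<open>t \<mapsto> (t, t\<^sup>D, t\<^sup>D\<^sup>2, \<dots>)\<close> violates all these
  relations. Any such point can be added to \<open>U\<close>.
\<close>

section \<open>Coordinate vectors and pivot bases\<close>

interpretation V: vector_space "sc :: 'k::field \<Rightarrow> (nat \<Rightarrow> 'k) \<Rightarrow> _"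
  by unfold_locales (auto simp: sc_def fun_eq_iff algebra_simps)

lemma sc_apply [simp]: "sc c v i = c * v i"
  by (simp add: sc_def)

lemma sum_apply: "(\<Sum>a\<in>A. f a) x = (\<Sum>a\<in>A. f a x)"
  by (induction A rule: infinite_finite_induct) auto

lemma kvec_0: "kvec 0 = {0 :: nat \<Rightarrow> 'k::zero}"
  by (auto simp: kvec_def fun_eq_iff)

lemma subspace_kvec: "V.subspace (kvec n :: (nat \<Rightarrow> 'k::field) set)"
  unfolding V.subspace_def by (simp add: kvec_def)

text \<open>The vectors \<open>w s\<close>, \<open>s \<in> S\<close>, form the basis of \<open>V\<close> in reduced row echelon form, with pivot
  coordinates \<open>S\<close>.\<close>

definition pivot_basis :: "(nat \<Rightarrow> 'k::field) set \<Rightarrow> nat set \<Rightarrow> (nat \<Rightarrow> nat \<Rightarrow> 'k) \<Rightarrow> bool" where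
  "pivot_basis V S w \<longleftrightarrow> finite S \<and>
     (\<forall>s\<in>S. w s \<in> V \<and> (\<forall>l\<in>S. w s l = (if l = s then 1 else 0))) \<and>
     (\<forall>v\<in>V. v = (\<Sum>s\<in>S. sc (v s) (w s)))"

lemma pivot_combination_apply:
  assumes "finite S" and "\<forall>s\<in>S. \<forall>l\<in>S. w s l = (if l = s then 1 else 0)" and "l \<in> S"
  shows "(\<Sum>s\<in>S. sc (c s) (w s)) l = c l"
proof -
  have "(\<Sum>s\<in>S. sc (c s) (w s)) l = (\<Sum>s\<in>S. if s = l then c s else 0)"
    unfolding sum_apply using assms by (intro sum.cong) auto
  also have "\<dots> = c l"
    using assms by simp
  finally show ?thesis .
qed

lemma pivot_basis_mem_iff:
  assumes "pivot_basis V S w" and "V.subspace V"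
  shows "v \<in> V \<longleftrightarrow> v = (\<Sum>s\<in>S. sc (v s) (w s))"
proof
  assume "v = (\<Sum>s\<in>S. sc (v s) (w s))"
  also have "\<dots> \<in> V"
    using assms by (intro V.subspace_sum V.subspace_scale) (auto simp: pivot_basis_def)
  finally show "v \<in> V" .
qed (use assms in \<open>auto simp: pivot_basis_def\<close>)

lemma card_pivots_eq_dim:
  assumes pb: "pivot_basis V S w" and V: "V.subspace V"
  shows "card S = V.dim V"
proof -
  have finS: "finite S" and wV: "\<And>s. s \<in> S \<Longrightarrow> w s \<in> V"
    using pb by (auto simp: pivot_basis_def)
  have inj: "inj_on w S"
  proof (rule inj_onI)
    fix s t assume "s \<in> S" "t \<in> S" "w s = w t"
    then show "s = t"
      using pb unfolding pivot_basis_def by (metis one_neq_zero)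
  qed
  have "V.independent (w ` S)"
  proof -
    have "c (w l) = 0" if "(\<Sum>v\<in>w ` S. sc (c v) v) = 0" "l \<in> S" for c l
    proof -
      have "(\<Sum>s\<in>S. sc (c (w s)) (w s)) = 0"
        using that(1) by (simp add: sum.reindex[OF inj])
      then show ?thesis
        using pivot_combination_apply[OF finS _ that(2), of w "\<lambda>s. c (w s)"] pb
        by (simp add: pivot_basis_def)
    qed
    then show ?thesis
      using finS by (auto simp: V.dependent_finite)
  qed
  moreover have "V.span (w ` S) = V"
  proof
    show "V.span (w ` S) \<subseteq> V"
      using wV V by (intro V.span_minimal) auto
    show "V \<subseteq> V.span (w ` S)"
    proof
      fix v assume "v \<in> V"
      then have "v = (\<Sum>s\<in>S. sc (v s) (w s))"
        using pb by (simp add: pivot_basis_def)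
      also have "\<dots> \<in> V.span (w ` S)"
        by (intro V.span_sum V.span_scale V.span_base) auto
      finally show "v \<in> V.span (w ` S)" .
    qed
  qed
  ultimately show ?thesis
    using V.dim_span_eq_card_independent card_image[OF inj] by metis
qed

lemma pivot_basis_of_minimal_set:
  assumes V: "V.subspace V" and finS: "finite S"
    and det: "\<And>v. v \<in> V \<Longrightarrow> (\<forall>s\<in>S. v s = 0) \<Longrightarrow> v = 0"
    and min: "\<And>s. s \<in> S \<Longrightarrow> \<exists>v\<in>V. (\<forall>l\<in>S - {s}. v l = 0) \<and> v \<noteq> 0"
  shows "\<exists>w. pivot_basis V S w"
proof -
  have "\<exists>u\<in>V. \<forall>l\<in>S. u l = (if l = s then 1 else 0)" if s: "s \<in> S" for s
  proof -
    obtain v where v: "v \<in> V" "\<forall>l\<in>S - {s}. v l = 0" "v \<noteq> 0"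
      using min[OF s] by blast
    have "v s \<noteq> 0"
      using det[OF v(1)] v(2,3) by (metis Diff_iff empty_iff insert_iff)
    then show ?thesis
      using v V by (intro bexI[of _ "sc (1 / v s) v"]) (auto intro: V.subspace_scale)
  qed
  then obtain w where w: "\<forall>s\<in>S. w s \<in> V \<and> (\<forall>l\<in>S. w s l = (if l = s then 1 else 0))"
    by metis
  have "v = (\<Sum>s\<in>S. sc (v s) (w s))" if v: "v \<in> V" for v
  proof -
    define z where "z = v - (\<Sum>s\<in>S. sc (v s) (w s))"
    have "z \<in> V"
      unfolding z_def using v w V by (auto intro!: V.subspace_diff V.subspace_sum V.subspace_scale)
    moreover have "z l = 0" if "l \<in> S" for l
      using pivot_combination_apply[OF finS _ that, of w v] w by (simp add: z_def)
    ultimately show ?thesis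
      using det unfolding z_def by fastforce
  qed
  then show ?thesis
    using finS w by (auto simp: pivot_basis_def)
qed

lemma exists_pivot_basis:
  assumes VN: "V \<subseteq> kvec N" and V: "V.subspace V"
  obtains S w where "S \<subseteq> {..<N}" "pivot_basis V S w" "card S = V.dim V"
proof -
  define SS where "SS = {S. S \<subseteq> {..<N} \<and> (\<forall>v\<in>V. (\<forall>s\<in>S. v s = 0) \<longrightarrow> v = 0)}"
  have "v = 0" if "v \<in> V" "\<forall>s<N. v s = 0" for v
  proof
    fix i
    show "v i = 0 i"
      using that VN by (cases "i < N") (auto simp: kvec_def)
  qed
  then have "{..<N} \<in> SS"
    by (auto simp: SS_def)
  then obtain S where S: "S \<in> SS" and least: "\<And>S'. S' \<in> SS \<Longrightarrow> card S \<le> card S'"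
    using ex_has_least_nat[of "\<lambda>S. S \<in> SS" _ card] by blast
  have SN: "S \<subseteq> {..<N}" and finS: "finite S"
    using S finite_subset by (auto simp: SS_def)
  have "\<exists>v\<in>V. (\<forall>l\<in>S - {s}. v l = 0) \<and> v \<noteq> 0" if "s \<in> S" for s
  proof -
    have "card (S - {s}) < card S"
      using finS that by (rule card_Diff1_less)
    then have "S - {s} \<notin> SS"
      using least by fastforce
    then show ?thesis
      using SN by (auto simp: SS_def)
  qed
  then obtain w where "pivot_basis V S w"
    using pivot_basis_of_minimal_set[OF V finS] S by (auto simp: SS_def)
  then show ?thesis
    using that SN card_pivots_eq_dim[OF _ V] by blast
qed

section \<open>Polynomial functions with few variables\<close>

definition fscale :: "'k::field \<Rightarrow> (('v \<Rightarrow> 'k) \<Rightarrow> 'k) \<Rightarrow> (('v \<Rightarrow> 'k) \<Rightarrow> 'k)" where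
  "fscale c f = (\<lambda>x. c * f x)"

interpretation P: vector_space "fscale :: 'k::field \<Rightarrow> (('v \<Rightarrow> 'k) \<Rightarrow> 'k) \<Rightarrow> _"
  by unfold_locales (auto simp: fscale_def fun_eq_iff algebra_simps)

definition monomial_fun :: "'v set \<Rightarrow> ('v \<Rightarrow> nat) \<Rightarrow> ('v \<Rightarrow> 'k::field) \<Rightarrow> 'k" where
  "monomial_fun Z b x = (\<Prod>z\<in>Z. x z ^ b z)"

definition monomials :: "'v set \<Rightarrow> nat \<Rightarrow> (('v \<Rightarrow> 'k::field) \<Rightarrow> 'k) set" where
  "monomials Z E = {monomial_fun Z b | b. \<forall>z\<in>Z. b z \<le> E}"

abbreviation polyfuns :: "'v set \<Rightarrow> nat \<Rightarrow> (('v \<Rightarrow> 'k::field) \<Rightarrow> 'k) set" where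
  "polyfuns Z E \<equiv> P.span (monomials Z E)"

lemma monomial_fun_in_monomials: "\<forall>z\<in>Z. b z \<le> E \<Longrightarrow> monomial_fun Z b \<in> monomials Z E"
  unfolding monomials_def by blast

lemma monomials_finite_card:
  assumes "finite Z"
  shows "finite (monomials Z E :: (('v \<Rightarrow> 'k::field) \<Rightarrow> 'k) set)"
    and "card (monomials Z E :: (('v \<Rightarrow> 'k::field) \<Rightarrow> 'k) set) \<le> (E + 1) ^ card Z"
proof -
  let ?B = "PiE Z (\<lambda>_. {..E})"
  have sub: "(monomials Z E :: (('v \<Rightarrow> 'k) \<Rightarrow> 'k) set) \<subseteq> monomial_fun Z ` ?B"
  proof
    fix f :: "('v \<Rightarrow> 'k) \<Rightarrow> 'k" assume "f \<in> monomials Z E"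
    then obtain b where b: "f = monomial_fun Z b" "\<forall>z\<in>Z. b z \<le> E"
      by (auto simp: monomials_def)
    then have "f = monomial_fun Z (restrict b Z)"
      unfolding monomial_fun_def by (auto intro!: prod.cong)
    moreover have "restrict b Z \<in> ?B"
      using b by simp
    ultimately show "f \<in> monomial_fun Z ` ?B"
      by blast
  qed
  have finB: "finite ?B"
    using assms by (simp add: finite_PiE)
  then show "finite (monomials Z E :: (('v \<Rightarrow> 'k) \<Rightarrow> 'k) set)"
    using sub finite_subset by blast
  have "card (monomials Z E :: (('v \<Rightarrow> 'k) \<Rightarrow> 'k) set) \<le> card ?B"
    using order.trans[OF card_mono[OF finite_imageI[OF finB] sub] card_image_le[OF finB]] .
  then show "card (monomials Z E :: (('v \<Rightarrow> 'k) \<Rightarrow> 'k) set) \<le> (E + 1) ^ card Z"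
    using assms by (simp add: card_PiE)
qed

lemma polyfuns_mono:
  fixes Z :: "'v set"
  assumes "E \<le> E'" and "f \<in> polyfuns Z E"
  shows "f \<in> polyfuns Z E'"
proof -
  have "monomials Z E \<subseteq> (monomials Z E' :: (('v \<Rightarrow> 'k::field) \<Rightarrow> 'k) set)"
    using assms(1) le_trans by (fastforce simp: monomials_def)
  then show ?thesis
    using assms(2) P.span_mono by blast
qed

lemma const_in_polyfuns: "(\<lambda>x. c :: 'k::field) \<in> polyfuns Z E"
proof -
  have "fscale c (monomial_fun Z (\<lambda>_. 0)) \<in> polyfuns Z E"
    by (intro P.span_scale P.span_base monomial_fun_in_monomials) simp
  then show ?thesis
    by (simp add: fscale_def monomial_fun_def)
qed

lemma var_in_polyfuns:
  fixes Z :: "'v set"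
  assumes "finite Z" and "z \<in> Z" and "1 \<le> E"
  shows "(\<lambda>x. x z :: 'k::field) \<in> polyfuns Z E"
proof -
  define b where "b z' = (if z' = z then 1 else 0 :: nat)" for z'
  have "monomial_fun Z b x = (\<Prod>z'\<in>Z. if z' = z then x z else 1)" for x :: "'v \<Rightarrow> 'k::field"
    unfolding monomial_fun_def by (intro prod.cong) (auto simp: b_def)
  then have "monomial_fun Z b = (\<lambda>x. x z :: 'k)"
    using assms by (simp add: fun_eq_iff)
  moreover have "monomial_fun Z b \<in> monomials Z E"
    using assms by (intro monomial_fun_in_monomials) (simp add: b_def)
  ultimately show ?thesis
    by (metis P.span_base)
qed

lemma polyfuns_add: "f \<in> polyfuns Z E \<Longrightarrow> g \<in> polyfuns Z E \<Longrightarrow> (\<lambda>x. f x + g x) \<in> polyfuns Z E"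
  using P.span_add[of f _ g] by (simp add: plus_fun_def)

lemma polyfuns_scale: "f \<in> polyfuns Z E \<Longrightarrow> (\<lambda>x. c * f x) \<in> polyfuns Z E"
  using P.span_scale[of f _ c] by (simp add: fscale_def)

lemma polyfuns_sum:
  "(\<And>i. i \<in> I \<Longrightarrow> f i \<in> polyfuns Z E) \<Longrightarrow> (\<lambda>x. \<Sum>i\<in>I. f i x) \<in> polyfuns Z E"
  using P.span_sum[of I f] by (simp add: sum_apply[abs_def])

lemma monomials_mult:
  assumes "f \<in> monomials Z E1" and "g \<in> monomials Z E2"
  shows "(\<lambda>x. f x * g x) \<in> monomials Z (E1 + E2)"
proof -
  obtain b c where "f = monomial_fun Z b" "\<forall>z\<in>Z. b z \<le> E1"
    and "g = monomial_fun Z c" "\<forall>z\<in>Z. c z \<le> E2"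
    using assms by (auto simp: monomials_def)
  then have "(\<lambda>x. f x * g x) = monomial_fun Z (\<lambda>z. b z + c z)"
    by (simp add: monomial_fun_def fun_eq_iff power_add prod.distrib)
  moreover have "\<forall>z\<in>Z. b z + c z \<le> E1 + E2"
    using \<open>\<forall>z\<in>Z. b z \<le> E1\<close> \<open>\<forall>z\<in>Z. c z \<le> E2\<close> by (simp add: add_mono)
  ultimately show ?thesis
    by (simp add: monomial_fun_in_monomials)
qed

lemma polyfuns_mult_monomial:
  assumes f: "f \<in> monomials Z E1" and g: "g \<in> polyfuns Z E2"
  shows "(\<lambda>x. f x * g x) \<in> polyfuns Z (E1 + E2)"
  using g
proof (induction rule: P.span_induct_alt)
  case base
  show ?case
    using P.span_zero by (simp add: zero_fun_def)
next
  case (step c h g)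
  have "(\<lambda>x. f x * (fscale c h + g) x) = fscale c (\<lambda>x. f x * h x) + (\<lambda>x. f x * g x)"
    by (simp add: fscale_def fun_eq_iff algebra_simps)
  then show ?case
    using P.span_add[OF P.span_scale[OF P.span_base[OF monomials_mult[OF f step(1)]]] step(2)]
    by simp
qed

lemma polyfuns_mult:
  assumes f: "f \<in> polyfuns Z E1" and g: "g \<in> polyfuns Z E2"
  shows "(\<lambda>x. f x * g x) \<in> polyfuns Z (E1 + E2)"
  using f
proof (induction rule: P.span_induct_alt)
  case base
  show ?case
    using P.span_zero by (simp add: zero_fun_def)
next
  case (step c h f)
  have "(\<lambda>x. (fscale c h + f) x * g x) = fscale c (\<lambda>x. h x * g x) + (\<lambda>x. f x * g x)"
    by (simp add: fscale_def fun_eq_iff algebra_simps)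
  then show ?case
    using P.span_add[OF P.span_scale[OF polyfuns_mult_monomial[OF step(1) g]] step(2)]
    by simp
qed

lemma polyfuns_prod:
  assumes "finite I" and "\<And>i. i \<in> I \<Longrightarrow> f i \<in> polyfuns Z (E i)"
  shows "(\<lambda>x. \<Prod>i\<in>I. f i x) \<in> polyfuns Z (\<Sum>i\<in>I. E i)"
  using assms
proof (induction I rule: finite_induct)
  case empty
  show ?case
    using const_in_polyfuns[of 1] by simp
next
  case (insert i I)
  then show ?case
    using polyfuns_mult[of "f i" Z "E i"] by simp
qed

lemma polyfuns_power: "f \<in> polyfuns Z E \<Longrightarrow> (\<lambda>x. f x ^ k) \<in> polyfuns Z (k * E)"
  using polyfuns_prod[of "{..<k}" "\<lambda>_. f" Z "\<lambda>_. E"] by simp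

lemma linear_relation_if_not_inj_on:
  fixes f :: "'a \<Rightarrow> 'b \<Rightarrow> 'k::field"
  assumes I: "finite I" and "\<not> inj_on f I"
  shows "\<exists>c. (\<exists>a\<in>I. c a \<noteq> 0) \<and> (\<forall>x. (\<Sum>a\<in>I. c a * f a x) = 0)"
proof -
  obtain a b where ab: "a \<in> I" "b \<in> I" "a \<noteq> b" "f a = f b"
    using assms(2) unfolding inj_on_def by blast
  define c where "c g = (if g = a then 1 else if g = b then -1 else 0 :: 'k)" for g
  have rel: "(\<Sum>g\<in>I. c g * f g x) = 0" for x
  proof -
    have "(\<Sum>g\<in>I. c g * f g x)
        = (\<Sum>g\<in>I. (if g = a then f a x else 0) + (if g = b then - f b x else 0))"
      using ab by (intro sum.cong) (auto simp: c_def)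
    also have "\<dots> = 0"
      using ab I by (simp add: sum.distrib)
    finally show ?thesis .
  qed
  show ?thesis
    using ab(1) rel by (intro exI[of _ c]) (auto simp: c_def)
qed

lemma polyfuns_linear_relation:
  fixes f :: "'a \<Rightarrow> ('v \<Rightarrow> 'k::field) \<Rightarrow> 'k"
  assumes Z: "finite Z" and I: "finite I" and fI: "\<And>a. a \<in> I \<Longrightarrow> f a \<in> polyfuns Z E"
    and card: "(E + 1) ^ card Z < card I"
  shows "\<exists>c. (\<exists>a\<in>I. c a \<noteq> 0) \<and> (\<forall>x. (\<Sum>a\<in>I. c a * f a x) = 0)"
proof (cases "inj_on f I")
  case False
  then show ?thesis
    using I by (rule linear_relation_if_not_inj_on[rotated])
next
  case True
  have fin: "finite (monomials Z E :: (('v \<Rightarrow> 'k) \<Rightarrow> 'k) set)"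
    by (rule monomials_finite_card(1)[OF Z])
  have "P.dependent (f ` I)"
  proof (rule ccontr)
    assume "P.independent (f ` I)"
    moreover have "f ` I \<subseteq> polyfuns Z E"
      using fI by blast
    ultimately have "card (f ` I) \<le> card (monomials Z E :: (('v \<Rightarrow> 'k) \<Rightarrow> 'k) set)"
      by (rule conjunct2[OF P.independent_span_bound[OF fin]])
    also have "\<dots> \<le> (E + 1) ^ card Z"
      by (rule monomials_finite_card(2)[OF Z])
    finally have "card I \<le> (E + 1) ^ card Z"
      unfolding card_image[OF True] .
    then show False
      using card leD by blast
  qed
  then have "\<exists>u. (\<exists>v\<in>f ` I. u v \<noteq> 0) \<and> (\<Sum>v\<in>f ` I. fscale (u v) v) = 0"
    by (rule iffD1[OF P.dependent_finite[of "f ` I", OF finite_imageI[OF I]]])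
  then obtain u where u: "(\<exists>v\<in>f ` I. u v \<noteq> 0) \<and> (\<Sum>v\<in>f ` I. fscale (u v) v) = 0" ..
  have rel: "(\<Sum>a\<in>I. u (f a) * f a x) = 0" for x
  proof -
    have "(\<Sum>a\<in>I. u (f a) * f a x) = (\<Sum>v\<in>f ` I. fscale (u v) v) x"
      by (simp add: sum.reindex[OF True] sum_apply fscale_def)
    then show ?thesis
      using conjunct2[OF u] by simp
  qed
  show ?thesis
    using conjunct1[OF u] rel by (intro exI[of _ "\<lambda>a. u (f a)"]) auto
qed

section \<open>Kronecker substitution over infinite fields\<close>

lemma finite_field_power_card:
  fixes x :: "'k::field"
  assumes fin: "finite (UNIV :: 'k set)"
  shows "x ^ card (UNIV :: 'k set) = x"
proof (cases "x = 0")
  case True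
  then show ?thesis
    using fin by (simp add: finite_UNIV_card_ge_0)
next
  case False
  define N where "N = (UNIV :: 'k set) - {0}"
  have "bij_betw (\<lambda>y. x * y) N N"
    using False by (intro bij_betwI[where g = "\<lambda>y. y / x"]) (auto simp: N_def)
  then have "(\<Prod>y\<in>N. x * y) = (\<Prod>y\<in>N. y)"
    by (rule prod.reindex_bij_betw)
  moreover have "(\<Prod>y\<in>N. y) \<noteq> 0"
    using fin by (simp add: N_def)
  ultimately have "x ^ card N = 1"
    by (simp add: prod.distrib)
  moreover have "card (UNIV :: 'k set) = Suc (card N)"
    using fin finite_UNIV_card_ge_0[OF fin] by (simp add: N_def)
  ultimately show ?thesis
    by simp
qed

lemma infinite_UNIV_alg_closed_field: "infinite (UNIV :: 'k::alg_closed_field set)"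
proof
  assume fin: "finite (UNIV :: 'k set)"
  define q where "q = card (UNIV :: 'k set)"
  define c where "c i = (if i = 0 then 1 else if i = 1 then -1 else 0 :: 'k)" for i :: nat
  have "card {0, 1 :: 'k} \<le> q"
    unfolding q_def using fin by (intro card_mono) auto
  then have q: "q \<ge> 2"
    by simp
  obtain x where x: "x ^ q + (\<Sum>i<q. c i * x ^ i) = 0"
    using alg_closed[of q c] q by auto
  have "(\<Sum>i<q. c i * x ^ i) = (\<Sum>i<q. (if i = 0 then 1 else 0) + (if i = 1 then - x else 0))"
    by (intro sum.cong) (auto simp: c_def)
  also have "\<dots> = 1 - x"
    using q by (simp add: sum.distrib)
  finally show False
    using x finite_field_power_card[OF fin, of x] by (simp add: q_def)
qed

lemma sum_powers_factor_root:
  fixes a :: "nat \<Rightarrow> 'k::comm_ring_1"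
  assumes "(\<Sum>e\<le>Suc K. a e * t0 ^ e) = 0"
  shows "(\<Sum>e\<le>Suc K. a e * t ^ e) =
    (t - t0) * (\<Sum>i\<le>K. (\<Sum>e\<in>{Suc i..Suc K}. a e * t0 ^ (e - Suc i)) * t ^ i)"
proof -
  have "(\<Sum>e\<le>Suc K. a e * t ^ e) = (\<Sum>e\<le>Suc K. a e * (t ^ e - t0 ^ e))"
    using assms by (simp add: sum_subtractf right_diff_distrib)
  also have "\<dots> = (t - t0) * (\<Sum>e\<le>Suc K. \<Sum>i<e. a e * t0 ^ (e - Suc i) * t ^ i)"
    by (simp add: power_diff_sumr2 sum_distrib_left algebra_simps)
  also have "(\<Sum>e\<le>Suc K. \<Sum>i<e. a e * t0 ^ (e - Suc i) * t ^ i)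
      = (\<Sum>i\<le>K. (\<Sum>e\<in>{Suc i..Suc K}. a e * t0 ^ (e - Suc i)) * t ^ i)"
    unfolding sum.nested_swap' lessThan_Suc_atMost sum_distrib_right ..
  finally show ?thesis .
qed

lemma finite_roots:
  fixes a :: "nat \<Rightarrow> 'k::field"
  shows "\<exists>e\<le>K. a e \<noteq> 0 \<Longrightarrow> finite {t. (\<Sum>e\<le>K. a e * t ^ e) = 0}"
proof (induction K arbitrary: a)
  case 0
  then show ?case by simp
next
  case (Suc K)
  show ?case
  proof (cases "a (Suc K) = 0")
    case True
    then show ?thesis
      using Suc.IH[of a] Suc.prems by (auto simp: le_Suc_eq)
  next
    case False
    show ?thesis
    proof (cases "\<exists>t0. (\<Sum>e\<le>Suc K. a e * t0 ^ e) = 0")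
      case True
      then obtain t0 where t0: "(\<Sum>e\<le>Suc K. a e * t0 ^ e) = 0" ..
      define b where "b i = (\<Sum>e\<in>{Suc i..Suc K}. a e * t0 ^ (e - Suc i))" for i
      have "b K \<noteq> 0"
        using False by (simp add: b_def)
      then have "finite {t. (\<Sum>i\<le>K. b i * t ^ i) = 0}"
        using Suc.IH[of b] by blast
      moreover have "{t. (\<Sum>e\<le>Suc K. a e * t ^ e) = 0} \<subseteq> insert t0 {t. (\<Sum>i\<le>K. b i * t ^ i) = 0}"
        unfolding sum_powers_factor_root[OF t0] b_def by auto
      ultimately show ?thesis
        using finite_subset by auto
    qed simp
  qed
qed

definition exponent_box :: "nat \<Rightarrow> nat \<Rightarrow> (nat \<Rightarrow> nat) set" where
  "exponent_box n D = PiE {..<n} (\<lambda>_. {..<D})"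

definition digit_value :: "nat \<Rightarrow> nat \<Rightarrow> (nat \<Rightarrow> nat) \<Rightarrow> nat" where
  "digit_value D n a = (\<Sum>i<n. a i * D ^ i)"

lemma digit_value_Suc: "digit_value D (Suc n) a = a 0 + D * digit_value D n (\<lambda>i. a (Suc i))"
  unfolding digit_value_def sum.lessThan_Suc_shift sum_distrib_left
  by (simp add: mult.left_commute)

lemma digit_value_eq_imp_eq:
  "\<forall>i<n. a i < D \<Longrightarrow> \<forall>i<n. b i < D \<Longrightarrow> digit_value D n a = digit_value D n b \<Longrightarrow> \<forall>i<n. a i = b i"
proof (induction n arbitrary: a b)
  case 0
  then show ?case by simp
next
  case (Suc n)
  have "a 0 = b 0" and "digit_value D n (\<lambda>i. a (Suc i)) = digit_value D n (\<lambda>i. b (Suc i))"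
  proof -
    have "a 0 < D" "b 0 < D"
      using Suc.prems by auto
    moreover have "(a 0 + D * digit_value D n (\<lambda>i. a (Suc i))) mod D = (b 0 + D * digit_value D n (\<lambda>i. b (Suc i))) mod D"
      using Suc.prems(3) by (simp add: digit_value_Suc)
    ultimately show "a 0 = b 0"
      by simp
    then show "digit_value D n (\<lambda>i. a (Suc i)) = digit_value D n (\<lambda>i. b (Suc i))"
      using Suc.prems \<open>a 0 < D\<close> by (simp add: digit_value_Suc)
  qed
  moreover have "\<forall>i<n. a (Suc i) = b (Suc i)"
    using Suc.IH[of "\<lambda>i. a (Suc i)" "\<lambda>i. b (Suc i)"] Suc.prems calculation(2) by simp
  ultimately show ?case
    by (metis less_Suc_eq_0_disj)
qed

lemma inj_on_digit_value: "inj_on (digit_value D n) (exponent_box n D)"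
proof (rule inj_onI)
  fix a b assume a: "a \<in> exponent_box n D" and b: "b \<in> exponent_box n D"
    and "digit_value D n a = digit_value D n b"
  then have "\<forall>i<n. a i = b i"
    by (intro digit_value_eq_imp_eq) (auto simp: exponent_box_def)
  then show "a = b"
    using a b unfolding exponent_box_def by (intro PiE_ext) auto
qed

lemma finite_roots_kronecker_substitution:
  fixes c :: "(nat \<Rightarrow> nat) \<Rightarrow> 'k::field"
  assumes a0: "a0 \<in> exponent_box n D" and "c a0 \<noteq> 0"
  shows "finite {t. (\<Sum>a\<in>exponent_box n D. c a * (\<Prod>i<n. (t ^ D ^ i) ^ a i)) = 0}"
proof -
  let ?B = "exponent_box n D"
  have finB: "finite ?B"
    by (simp add: exponent_box_def finite_PiE)
  define K where "K = Max (digit_value D n ` ?B)"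
  have le_K: "digit_value D n a \<le> K" if "a \<in> ?B" for a
    unfolding K_def using finB that by simp
  define A where "A e = (\<Sum>a\<in>?B. if digit_value D n a = e then c a else 0)" for e
  have "(\<Sum>a\<in>?B. c a * (\<Prod>i<n. (t ^ D ^ i) ^ a i)) = (\<Sum>e\<le>K. A e * t ^ e)" for t :: 'k
  proof -
    have "(\<Sum>e\<le>K. A e * t ^ e) = (\<Sum>a\<in>?B. \<Sum>e\<le>K. if digit_value D n a = e then c a * t ^ e else 0)"
      unfolding A_def sum_distrib_right by (subst sum.swap) (auto intro!: sum.cong)
    also have "\<dots> = (\<Sum>a\<in>?B. c a * t ^ digit_value D n a)"
      using le_K by (intro sum.cong) auto
    finally show ?thesis
      by (simp add: digit_value_def power_sum power_mult[symmetric] mult.commute)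
  qed
  moreover have "A (digit_value D n a0) = c a0"
  proof -
    have "A (digit_value D n a0) = (\<Sum>a\<in>?B. if a = a0 then c a else 0)"
      unfolding A_def using inj_on_digit_value[of D n] a0 by (intro sum.cong) (auto simp: inj_on_def)
    also have "\<dots> = c a0"
      using a0 finB by simp
    finally show ?thesis .
  qed
  then have "finite {t. (\<Sum>e\<le>K. A e * t ^ e) = 0}"
    using le_K[OF a0] assms(2) by (intro finite_roots) auto
  ultimately show ?thesis
    by simp
qed

lemma exponent_box_bound:
  fixes n s E :: nat
  assumes "s < n"
  defines "D \<equiv> ((E + 1) * n) ^ (n - 1) + 1"
  shows "(E * n * D + 1) ^ s < D ^ n"
proof -
  have "1 \<le> n * D"
    using assms by (simp add: D_def)
  then have "E * n * D + 1 \<le> (E + 1) * n * D"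
    by (simp add: algebra_simps)
  then have "(E * n * D + 1) ^ s \<le> ((E + 1) * n * D) ^ (n - 1)"
    using assms \<open>1 \<le> n * D\<close> by (intro order.trans[OF power_mono power_increasing]) auto
  also have "\<dots> = ((E + 1) * n) ^ (n - 1) * D ^ (n - 1)"
    by (simp add: power_mult_distrib)
  also have "\<dots> < D * D ^ (n - 1)"
    by (intro mult_strict_right_mono) (auto simp: D_def)
  also have "\<dots> = D ^ n"
    using assms by (cases n) auto
  finally show ?thesis .
qed

section \<open>Polynomial maps with few variables are not surjective\<close>

lemma polynomial_relation_in_box:
  fixes f :: "('v \<Rightarrow> 'k::field) \<Rightarrow> nat \<Rightarrow> 'k"
  assumes Z: "finite Z" "card Z < n" and f: "\<And>l. l < n \<Longrightarrow> (\<lambda>x. f x l) \<in> polyfuns Z E"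
  defines "D \<equiv> ((E + 1) * n) ^ (n - 1) + 1"
  shows "\<exists>c. (\<exists>a\<in>exponent_box n D. c a \<noteq> 0) \<and>
    (\<forall>x. (\<Sum>a\<in>exponent_box n D. c a * (\<Prod>i<n. f x i ^ a i)) = 0)"
proof -
  have "finite (exponent_box n D)"
    by (simp add: exponent_box_def finite_PiE)
  moreover have "(\<lambda>x. \<Prod>i<n. f x i ^ a i) \<in> polyfuns Z (E * n * D)" if a: "a \<in> exponent_box n D" for a
  proof (rule polyfuns_mono)
    have "a i < D" if "i < n" for i
      using a that by (auto simp: exponent_box_def)
    then have "(\<Sum>i<n. a i * E) \<le> (\<Sum>i<n. D * E)"
      by (intro sum_mono mult_right_mono) (simp_all add: less_imp_le)
    then show "(\<Sum>i<n. a i * E) \<le> E * n * D"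
      by (simp add: mult_ac)
    show "(\<lambda>x. \<Prod>i<n. f x i ^ a i) \<in> polyfuns Z (\<Sum>i<n. a i * E)"
      using f by (intro polyfuns_prod polyfuns_power) auto
  qed
  moreover have "(E * n * D + 1) ^ card Z < card (exponent_box n D)"
    using exponent_box_bound[OF Z(2), of E] by (simp add: D_def exponent_box_def card_PiE)
  ultimately show ?thesis
    by (rule polyfuns_linear_relation[OF Z(1)])
qed

lemma polynomial_maps_miss_point:
  fixes f :: "'s \<Rightarrow> ('v \<Rightarrow> 'k::alg_closed_field) \<Rightarrow> nat \<Rightarrow> 'k" and Z :: "'s \<Rightarrow> 'v set"
  assumes SS: "finite SS" and Z: "\<And>S. S \<in> SS \<Longrightarrow> finite (Z S) \<and> card (Z S) < n"
    and f: "\<And>S l. S \<in> SS \<Longrightarrow> l < n \<Longrightarrow> (\<lambda>x. f S x l) \<in> polyfuns (Z S) E"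
  obtains u where "u \<in> kvec n" and "\<And>S x. S \<in> SS \<Longrightarrow> f S x \<noteq> u"
proof -
  define D where "D = ((E + 1) * n) ^ (n - 1) + 1"
  define B where "B = exponent_box n D"
  have "\<forall>S\<in>SS. \<exists>c. (\<exists>a\<in>B. c a \<noteq> 0) \<and> (\<forall>x. (\<Sum>a\<in>B. c a * (\<Prod>i<n. f S x i ^ a i)) = 0)"
    unfolding B_def D_def using Z f by (blast intro: polynomial_relation_in_box)
  then obtain C where C: "\<forall>S\<in>SS. (\<exists>a\<in>B. C S a \<noteq> 0) \<and>
      (\<forall>x. (\<Sum>a\<in>B. C S a * (\<Prod>i<n. f S x i ^ a i)) = 0)"
    by (rule bchoice[THEN exE])
  then have C_nonzero: "\<And>S. S \<in> SS \<Longrightarrow> \<exists>a\<in>B. C S a \<noteq> 0"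
    and C_rel: "\<And>S x. S \<in> SS \<Longrightarrow> (\<Sum>a\<in>B. C S a * (\<Prod>i<n. f S x i ^ a i)) = 0"
    by blast+
  define R where "R S = {t. (\<Sum>a\<in>B. C S a * (\<Prod>i<n. (t ^ D ^ i) ^ a i)) = 0}" for S
  have "finite (R S)" if "S \<in> SS" for S
    using C_nonzero[OF that] finite_roots_kronecker_substitution unfolding R_def B_def by blast
  then have "finite (\<Union>S\<in>SS. R S)"
    using SS by blast
  then obtain t where t: "t \<notin> (\<Union>S\<in>SS. R S)"
    using ex_new_if_finite[OF infinite_UNIV_alg_closed_field] by blast
  show ?thesis
  proof
    show "(\<lambda>l. if l < n then t ^ D ^ l else 0) \<in> kvec n"
      by (simp add: kvec_def)
    fix S x assume S: "S \<in> SS"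
    show "f S x \<noteq> (\<lambda>l. if l < n then t ^ D ^ l else 0)"
    proof
      assume "f S x = (\<lambda>l. if l < n then t ^ D ^ l else 0)"
      then have "(\<Prod>i<n. f S x i ^ a i) = (\<Prod>i<n. (t ^ D ^ i) ^ a i)" for a
        by (intro prod.cong) auto
      then have "t \<in> R S"
        using C_rel[OF S, of x] by (simp add: R_def)
      then show False
        using t S by blast
    qed
  qed
qed

section \<open>The tensor images \<open>\<psi>\<^sub>M(V \<otimes> M\<^sub>1)\<close>\<close>

interpretation T: vector_space "sc2 :: 'k::field \<Rightarrow> (nat \<Rightarrow> nat \<Rightarrow> 'k) \<Rightarrow> _"
  by unfold_locales (auto simp: sc2_def fun_eq_iff algebra_simps)

lemma sc2_apply [simp]: "sc2 c t i j = c * t i j"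
  by (simp add: sc2_def)

lemma matapp_add: "matapp m n A (x + y) = matapp m n A x + matapp m n A y"
  by (auto simp: matapp_def fun_eq_iff algebra_simps sum.distrib)

lemma matapp_sc: "matapp m n A (sc c x) = sc c (matapp m n A x)"
  by (auto simp: matapp_def fun_eq_iff algebra_simps sum_distrib_left)

lemma additive_psi: "additive (psi r M)"
  by unfold_locales (simp add: psi_def arrow_def matapp_add fun_eq_iff sum.distrib)

lemma psi_sc2: "psi r M (sc2 c t) = sc c (psi r M t)"
proof -
  have row: "sc2 c t i = sc c (t i)" for i
    by (simp add: fun_eq_iff)
  show ?thesis
    unfolding psi_def arrow_def row matapp_sc by (simp add: fun_eq_iff sum_distrib_left)
qed

lemma psi_kvec: "psi r M t \<in> kvec (dim2 M)"
  by (simp add: psi_def arrow_def matapp_def kvec_def)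

lemma psi_tens_apply:
  "psi r M (tens a b) l =
     (if l < dim2 M then (\<Sum>i<r. \<Sum>j<dim1 M. arr M i l j * (a i * b j)) else 0)"
  by (simp add: psi_def arrow_def matapp_def tens_def)

lemma subspace_tensor_sub: "T.subspace (tensor_sub M V)"
  unfolding tensor_sub_def by (rule T.subspace_span)

definition in_Gr :: "nat \<Rightarrow> nat \<Rightarrow> (nat \<Rightarrow> 'k::field) set \<Rightarrow> bool" where
  "in_Gr r d V \<longleftrightarrow> V \<subseteq> kvec r \<and> V.subspace V \<and> V.dim V = d"

lemma rep_proj_iff: "rep_proj r d M \<longleftrightarrow> (\<forall>V. in_Gr r d V \<longrightarrow> inj_on (psi r M) (tensor_sub M V))"
  by (simp add: rep_proj_def in_Gr_def)

lemma tensor_sub_eq_sum_tens: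
  fixes M :: "'k::field krep"
  assumes pb: "pivot_basis V S w" and t: "t \<in> tensor_sub M V"
  obtains ms where "\<And>s. ms s \<in> kvec (dim1 M)" and "t = (\<Sum>s\<in>S. tens (w s) (ms s))"
proof -
  have "\<exists>ms. (\<forall>s. ms s \<in> kvec (dim1 M)) \<and> t = (\<Sum>s\<in>S. tens (w s) (ms s))"
    using t unfolding tensor_sub_def
  proof (induction rule: T.span_induct_alt)
    case base
    have "(0 :: nat \<Rightarrow> nat \<Rightarrow> 'k) = (\<Sum>s\<in>S. tens (w s) (\<lambda>_. 0))"
      by (simp add: tens_def fun_eq_iff sum_apply)
    then show ?case
      by (intro exI[of _ "\<lambda>_. 0"]) (simp add: kvec_def)
  next
    case (step c x y)
    obtain a m where x: "x = tens a m" "a \<in> V" "m \<in> kvec (dim1 M)"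
      using step(1) by blast
    obtain ms where ms: "\<forall>s. ms s \<in> kvec (dim1 M)" "y = (\<Sum>s\<in>S. tens (w s) (ms s))"
      using step(2) by blast
    have a_eq: "a = (\<Sum>s\<in>S. sc (a s) (w s))"
      using pb x(2) by (simp add: pivot_basis_def)
    have a: "a i = (\<Sum>s\<in>S. a s * w s i)" for i
      using fun_cong[OF a_eq, of i] by (simp add: sum_apply)
    have "sc2 c x + y = (\<Sum>s\<in>S. tens (w s) (sc (c * a s) m + ms s))"
    proof (intro ext)
      fix i j
      have "(sc2 c x + y) i j = c * (a i * m j) + (\<Sum>s\<in>S. w s i * ms s j)"
        by (simp add: x ms sum_apply tens_def)
      also have "\<dots> = c * ((\<Sum>s\<in>S. a s * w s i) * m j) + (\<Sum>s\<in>S. w s i * ms s j)"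
        by (subst a[of i]) (rule refl)
      also have "\<dots> = (\<Sum>s\<in>S. tens (w s) (sc (c * a s) m + ms s)) i j"
        by (simp add: sum_apply tens_def sum_distrib_left sum_distrib_right sum.distrib algebra_simps)
      finally show "(sc2 c x + y) i j = (\<Sum>s\<in>S. tens (w s) (sc (c * a s) m + ms s)) i j" .
    qed
    moreover have "sc (c * a s) m + ms s \<in> kvec (dim1 M)" for s
      using x(3) ms(1) by (simp add: kvec_def)
    ultimately show ?case
      by (intro exI[of _ "\<lambda>s. sc (c * a s) m + ms s"]) blast
  qed
  then obtain ms where "(\<forall>s. ms s \<in> kvec (dim1 M)) \<and> t = (\<Sum>s\<in>S. tens (w s) (ms s))" ..
  then show ?thesis
    using that by blast
qed

datatype 'a chart_var = Gr_coord nat nat | Fibre_coord nat nat | Span_coeff 'a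

definition chart_vars :: "nat \<Rightarrow> nat \<Rightarrow> 'a set \<Rightarrow> nat set \<Rightarrow> 'a chart_var set" where
  "chart_vars r m Us S =
     (\<lambda>(s, l). Gr_coord s l) ` (S \<times> ({..<r} - S)) \<union> (\<lambda>(s, j). Fibre_coord s j) ` (S \<times> {..<m}) \<union>
     Span_coeff ` Us"

definition chart_basis :: "nat \<Rightarrow> nat set \<Rightarrow> ('a chart_var \<Rightarrow> 'k::field) \<Rightarrow> nat \<Rightarrow> nat \<Rightarrow> 'k" where
  "chart_basis r S x s l = (if l = s then 1 else if l \<in> {..<r} - S then x (Gr_coord s l) else 0)"

definition chart_fibre :: "nat \<Rightarrow> ('a chart_var \<Rightarrow> 'k::field) \<Rightarrow> nat \<Rightarrow> nat \<Rightarrow> 'k" where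
  "chart_fibre m x s j = (if j < m then x (Fibre_coord s j) else 0)"

text \<open>On the affine chart of the Grassmannian with pivot set \<open>S\<close>, \<open>chart_map\<close> parametrizes the
  vectors \<open>\<psi>\<^sub>M(t) + u\<close> with \<open>t \<in> V \<otimes> M\<^sub>1\<close> and \<open>u \<in> span Us\<close>; its variables are the
  non-pivot entries of the basis of \<open>V\<close>, the coordinates of the \<open>M\<^sub>1\<close>-components of \<open>t\<close>, and the
  coefficients of \<open>u\<close>.\<close>

definition chart_map ::
  "nat \<Rightarrow> 'k::field krep \<Rightarrow> (nat \<Rightarrow> 'k) set \<Rightarrow> nat set \<Rightarrow> ((nat \<Rightarrow> 'k) chart_var \<Rightarrow> 'k) \<Rightarrow> nat \<Rightarrow> 'k"
where
  "chart_map r M Us S x =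
     (\<Sum>s\<in>S. psi r M (tens (chart_basis r S x s) (chart_fibre (dim1 M) x s))) +
     (\<Sum>u\<in>Us. sc (x (Span_coeff u)) u)"

lemma card_chart_vars:
  assumes "S \<subseteq> {..<r}" and "finite Us"
  shows "finite (chart_vars r m Us S)"
    and "card (chart_vars r m Us S) = card S * (r - card S) + card S * m + card Us"
proof -
  have finS: "finite S"
    using assms(1) finite_subset by blast
  let ?A = "(\<lambda>(s, l). Gr_coord s l) ` (S \<times> ({..<r} - S)) :: 'a chart_var set"
  let ?B = "(\<lambda>(s, j). Fibre_coord s j) ` (S \<times> {..<m}) :: 'a chart_var set"
  let ?C = "Span_coeff ` Us :: 'a chart_var set"
  have fin: "finite ?A" "finite ?B" "finite ?C"
    using finS assms(2) by auto
  then show "finite (chart_vars r m Us S)"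
    by (simp add: chart_vars_def)
  have "card ?A = card S * (r - card S)"
    using assms(1) finS
    by (simp add: card_image inj_on_def card_cartesian_product card_Diff_subset)
  moreover have "card ?B = card S * m"
    by (simp add: card_image inj_on_def card_cartesian_product)
  moreover have "card ?C = card Us"
    by (simp add: card_image inj_on_def)
  moreover have "?A \<inter> ?B = {}" and "(?A \<union> ?B) \<inter> ?C = {}"
    by auto
  then have "card (chart_vars r m Us S) = card ?A + card ?B + card ?C"
    unfolding chart_vars_def using fin by (simp add: card_Un_disjoint)
  ultimately show "card (chart_vars r m Us S) = card S * (r - card S) + card S * m + card Us"
    by simp
qed

lemma chart_map_polynomial:
  assumes S: "S \<subseteq> {..<r}" and Us: "finite Us"
  shows "(\<lambda>x. chart_map r M Us S x l) \<in> polyfuns (chart_vars r (dim1 M) Us S) 2"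
proof -
  let ?Z = "chart_vars r (dim1 M) Us S"
  have fin: "finite ?Z"
    using card_chart_vars(1)[OF S Us] .
  have basis: "(\<lambda>x. chart_basis r S x s i) \<in> polyfuns ?Z 1" if "s \<in> S" for s i
  proof -
    have "(\<lambda>x. x (Gr_coord s i)) \<in> polyfuns ?Z 1" if "i \<in> {..<r} - S"
      using \<open>s \<in> S\<close> that by (intro var_in_polyfuns[OF fin]) (auto simp: chart_vars_def)
    then show ?thesis
      unfolding chart_basis_def using const_in_polyfuns by (cases "i = s"; cases "i \<in> {..<r} - S") auto
  qed
  have fibre: "(\<lambda>x. chart_fibre (dim1 M) x s j) \<in> polyfuns ?Z 1" if "s \<in> S" for s j
  proof -
    have "(\<lambda>x. x (Fibre_coord s j)) \<in> polyfuns ?Z 1" if "j < dim1 M"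
      using \<open>s \<in> S\<close> that by (intro var_in_polyfuns[OF fin]) (auto simp: chart_vars_def)
    then show ?thesis
      unfolding chart_fibre_def using const_in_polyfuns by (cases "j < dim1 M") auto
  qed
  have coeff: "(\<lambda>x. x (Span_coeff u)) \<in> polyfuns ?Z 2" if "u \<in> Us" for u
    using that by (intro var_in_polyfuns[OF fin]) (auto simp: chart_vars_def)
  have "(\<lambda>x. chart_map r M Us S x l) =
      (\<lambda>x. (\<Sum>s\<in>S. \<Sum>i<r. \<Sum>j<dim1 M. (if l < dim2 M then arr M i l j else 0) *
          (chart_basis r S x s i * chart_fibre (dim1 M) x s j))
        + (\<Sum>u\<in>Us. u l * x (Span_coeff u)))"
    by (cases "l < dim2 M") (simp_all add: chart_map_def sum_apply psi_tens_apply mult.commute)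
  also have "\<dots> \<in> polyfuns ?Z 2"
    using polyfuns_mult[OF basis fibre] coeff const_in_polyfuns
    by (intro polyfuns_add polyfuns_sum polyfuns_scale) (auto simp: numeral_2_eq_2)
  finally show ?thesis .
qed

lemma tensor_image_plus_span_in_chart:
  fixes M :: "'k::field krep"
  assumes V: "in_Gr r d V" and t: "t \<in> tensor_sub M V" and v: "v \<in> V.span Us" and Us: "finite Us"
  obtains S x where "S \<subseteq> {..<r}" and "card S = d" and "psi r M t + v = chart_map r M Us S x"
proof -
  obtain S w where S: "S \<subseteq> {..<r}" and pb: "pivot_basis V S w" and card_S: "card S = V.dim V"
    using V exists_pivot_basis[of V r] by (auto simp: in_Gr_def)
  obtain ms where ms: "\<And>s. ms s \<in> kvec (dim1 M)" and t_eq: "t = (\<Sum>s\<in>S. tens (w s) (ms s))"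
    using tensor_sub_eq_sum_tens[OF pb t] by blast
  obtain cu where v_eq: "v = (\<Sum>u\<in>Us. sc (cu u) u)"
    using v V.span_finite[OF Us] by blast
  define x where "x z = (case z of Gr_coord s l \<Rightarrow> w s l | Fibre_coord s j \<Rightarrow> ms s j
      | Span_coeff u \<Rightarrow> cu u)" for z
  have "chart_basis r S x s = w s" if s: "s \<in> S" for s
  proof
    fix l
    have "w s \<in> kvec r"
      using pb s V by (auto simp: pivot_basis_def in_Gr_def)
    then show "chart_basis r S x s l = w s l"
      using pb s by (auto simp: chart_basis_def x_def pivot_basis_def kvec_def)
  qed
  moreover have "chart_fibre (dim1 M) x s = ms s" for s
    using ms by (auto simp: chart_fibre_def x_def kvec_def fun_eq_iff)
  ultimately have "psi r M t + v = chart_map r M Us S x"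
    by (simp add: chart_map_def t_eq v_eq x_def additive.sum[OF additive_psi])
  moreover have "card S = d"
    using card_S V by (simp add: in_Gr_def)
  ultimately show ?thesis
    using that[OF S] by blast
qed

lemma span_in_chart:
  assumes "v \<in> V.span Us" and "finite Us"
  obtains x where "v = chart_map r M Us S x"
proof -
  obtain cu where v_eq: "v = (\<Sum>u\<in>Us. sc (cu u) u)"
    using assms V.span_finite by blast
  define x where "x z = (case z of Span_coeff u \<Rightarrow> cu u | _ \<Rightarrow> 0)" for z
  have "tens a (chart_fibre (dim1 M) x s) = 0" for a s
    by (simp add: tens_def chart_fibre_def x_def fun_eq_iff)
  then have "chart_map r M Us S x = v"
    by (simp add: chart_map_def v_eq x_def additive.zero[OF additive_psi])
  then show ?thesis
    using that[of x] by simp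
qed

lemma exists_vector_off_tensor_images:
  fixes M :: "'k::alg_closed_field krep"
  assumes Us: "finite Us" and "d \<le> r" and dim: "d * (r - d) + d * dim1 M + card Us < dim2 M"
  obtains u where "u \<in> kvec (dim2 M)" and "u \<notin> V.span Us"
    and "\<And>V t v. in_Gr r d V \<Longrightarrow> t \<in> tensor_sub M V \<Longrightarrow> v \<in> V.span Us \<Longrightarrow> psi r M t + v \<noteq> u"
proof -
  define SS where "SS = {S. S \<subseteq> {..<r} \<and> card S = d}"
  show ?thesis
  proof (rule polynomial_maps_miss_point[where f = "chart_map r M Us" and Z = "chart_vars r (dim1 M) Us"
        and SS = SS and E = 2])
    show "finite SS"
      unfolding SS_def by (rule finite_subset[of _ "Pow {..<r}"]) auto
    show "finite (chart_vars r (dim1 M) Us S) \<and> card (chart_vars r (dim1 M) Us S) < dim2 M"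
      if "S \<in> SS" for S
      using card_chart_vars[of S r Us "dim1 M"] that Us dim by (auto simp: SS_def)
    show "(\<lambda>x. chart_map r M Us S x l) \<in> polyfuns (chart_vars r (dim1 M) Us S) 2"
      if "S \<in> SS" for S l
      using chart_map_polynomial[of S r Us M l] that Us by (auto simp: SS_def)
    fix u assume u: "u \<in> kvec (dim2 M)" and off: "\<And>S x. S \<in> SS \<Longrightarrow> chart_map r M Us S x \<noteq> u"
    show thesis
    proof (rule that[OF u])
      have "{..<d} \<in> SS"
        using \<open>d \<le> r\<close> by (auto simp: SS_def)
      show "u \<notin> V.span Us"
      proof
        assume "u \<in> V.span Us"
        then obtain x where "u = chart_map r M Us {..<d} x"
          by (rule span_in_chart[OF _ Us])
        then show False
          using off[OF \<open>{..<d} \<in> SS\<close>, of x] by simp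
      qed
      fix V t v assume "in_Gr r d V" "t \<in> tensor_sub M V" "v \<in> V.span Us"
      then obtain S x where "S \<subseteq> {..<r}" "card S = d" "psi r M t + v = chart_map r M Us S x"
        by (rule tensor_image_plus_span_in_chart[OF _ _ _ Us])
      then show "psi r M t + v \<noteq> u"
        using off[of S x] by (simp add: SS_def)
    qed
  qed
qed

section \<open>Subspaces of \<open>M\<^sub>2\<close> meeting the tensor images trivially\<close>

definition transversal :: "nat \<Rightarrow> nat \<Rightarrow> 'k::field krep \<Rightarrow> (nat \<Rightarrow> 'k) set \<Rightarrow> bool" where
  "transversal r d M U \<longleftrightarrow>
     (\<forall>V. in_Gr r d V \<longrightarrow> (\<forall>t\<in>tensor_sub M V. psi r M t \<in> U \<longrightarrow> psi r M t = 0))"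

lemma transversal_span_insert:
  assumes U: "transversal r d M (V.span Us)"
    and u: "\<And>V t v. in_Gr r d V \<Longrightarrow> t \<in> tensor_sub M V \<Longrightarrow> v \<in> V.span Us \<Longrightarrow> psi r M t + v \<noteq> u"
  shows "transversal r d M (V.span (insert u Us))"
  unfolding transversal_def
proof (intro allI impI ballI)
  fix V t assume V: "in_Gr r d V" and t: "t \<in> tensor_sub M V" and "psi r M t \<in> V.span (insert u Us)"
  then obtain k where k: "psi r M t - sc k u \<in> V.span Us"
    unfolding V.span_breakdown_eq by blast
  show "psi r M t = 0"
  proof (cases "k = 0")
    case True
    then show ?thesis
      using U V t k by (simp add: transversal_def)
  next
    case False
    have "sc2 (1 / k) t \<in> tensor_sub M V"
      using t subspace_tensor_sub by (rule T.subspace_scale[rotated])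
    moreover have "sc (- 1 / k) (psi r M t - sc k u) \<in> V.span Us"
      using k by (rule V.span_scale)
    moreover have "psi r M (sc2 (1 / k) t) + sc (- 1 / k) (psi r M t - sc k u) = u"
      using False by (simp add: psi_sc2 fun_eq_iff field_simps)
    ultimately show ?thesis
      using u[OF V] by blast
  qed
qed

lemma exists_transversal_independent_set:
  fixes M :: "'k::alg_closed_field krep"
  assumes "d \<le> r" and "d * (r - d) + d * dim1 M + a \<le> dim2 M"
  shows "\<exists>Us. finite Us \<and> Us \<subseteq> kvec (dim2 M) \<and> V.independent Us \<and> card Us = a \<and>
    transversal r d M (V.span Us)"
  using assms(2)
proof (induction a)
  case 0
  show ?case
  proof (intro exI[of _ "{}"] conjI)
    show "V.independent {}"
      by (rule V.independent_empty)
    show "transversal r d M (V.span {})"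
      by (simp add: transversal_def additive.zero[OF additive_psi])
  qed simp_all
next
  case (Suc a)
  then have "d * (r - d) + d * dim1 M + a \<le> dim2 M"
    by simp
  obtain Us where "finite Us \<and> Us \<subseteq> kvec (dim2 M) \<and> V.independent Us \<and> card Us = a \<and>
      transversal r d M (V.span Us)"
    using Suc.IH[OF \<open>d * (r - d) + d * dim1 M + a \<le> dim2 M\<close>] ..
  then have Us: "finite Us" "Us \<subseteq> kvec (dim2 M)" "V.independent Us" "card Us = a"
    and tr: "transversal r d M (V.span Us)"
    by simp_all
  have "d * (r - d) + d * dim1 M + card Us < dim2 M"
    using Us(4) Suc.prems by simp
  then show ?case
  proof (rule exists_vector_off_tensor_images[OF Us(1) assms(1)])
    fix u assume u: "u \<in> kvec (dim2 M)" "u \<notin> V.span Us"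
      and off: "\<And>V t v. in_Gr r d V \<Longrightarrow> t \<in> tensor_sub M V \<Longrightarrow> v \<in> V.span Us \<Longrightarrow> psi r M t + v \<noteq> u"
    have "u \<notin> Us"
      using u(2) V.span_base by blast
    show ?case
    proof (intro exI[of _ "insert u Us"] conjI)
      show "V.independent (insert u Us)"
        by (rule V.independent_insertI[OF u(2) Us(3)])
      show "transversal r d M (V.span (insert u Us))"
        by (intro transversal_span_insert[OF tr] off)
    qed (use Us u \<open>u \<notin> Us\<close> in simp_all)
  qed
qed

section \<open>Quotients of \<open>M\<close> by subspaces of \<open>M\<^sub>2\<close>\<close>

definition mat_mult :: "nat \<Rightarrow> (nat \<Rightarrow> nat \<Rightarrow> 'k::field) \<Rightarrow> (nat \<Rightarrow> nat \<Rightarrow> 'k) \<Rightarrow> nat \<Rightarrow> nat \<Rightarrow> 'k" where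
  "mat_mult m H A = (\<lambda>i j. \<Sum>l<m. H i l * A l j)"

lemma matapp_mat_mult: "matapp p n (mat_mult m H A) x = matapp p m H (matapp m n A x)"
proof
  fix i
  have "(\<Sum>j<n. (\<Sum>l<m. H i l * A l j) * x j) = (\<Sum>l<m. H i l * (\<Sum>j<n. A l j * x j))"
    by (simp add: sum_distrib_left sum_distrib_right mult.assoc sum.swap[of _ "{..<n}"])
  then show "matapp p n (mat_mult m H A) x i = matapp p m H (matapp m n A x) i"
    by (simp add: matapp_def mat_mult_def)
qed

lemma matapp_identity:
  assumes "x \<in> kvec m"
  shows "matapp m m (\<lambda>i j. if i = j then 1 else 0) x = x"
proof
  fix i
  have "(\<Sum>j<m. (if i = j then 1 else 0) * x j) = (\<Sum>j<m. if j = i then x j else 0)"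
    by (intro sum.cong) auto
  then show "matapp m m (\<lambda>i j. if i = j then 1 else 0) x i = x i"
    using assms by (simp add: matapp_def kvec_def)
qed

lemma additive_matapp: "additive (matapp m n A)"
  by unfold_locales (rule matapp_add)

definition quotient_rep :: "nat \<Rightarrow> (nat \<Rightarrow> nat \<Rightarrow> 'k::field) \<Rightarrow> 'k krep \<Rightarrow> 'k krep" where
  "quotient_rep p H M = \<lparr>dim1 = dim1 M, dim2 = p, arr = (\<lambda>i. mat_mult (dim2 M) H (arr M i))\<rparr>"

lemma arrow_quotient_rep: "arrow (quotient_rep p H M) i x = matapp p (dim2 M) H (arrow M i x)"
  by (simp add: arrow_def quotient_rep_def matapp_mat_mult)

lemma psi_quotient_rep: "psi r (quotient_rep p H M) t = matapp p (dim2 M) H (psi r M t)"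
proof -
  have "psi r N t = (\<Sum>i<r. arrow N i (t i))" for N :: "'a krep"
    by (simp add: psi_def fun_eq_iff sum_apply)
  then show ?thesis
    by (simp add: arrow_quotient_rep additive.sum[OF additive_matapp])
qed

lemma short_exact_quotient_rep:
  fixes M :: "'k::field krep"
  assumes G_inj: "inj_on (matapp (dim2 M) a G) (kvec a)"
    and G_img: "matapp (dim2 M) a G ` kvec a = {x \<in> kvec (dim2 M). matapp p (dim2 M) H x = 0}"
    and H_surj: "matapp p (dim2 M) H ` kvec (dim2 M) = kvec p"
  shows "short_exact r (aP0 a) M (quotient_rep p H M) (\<lambda>_ _. 0, G) (\<lambda>i j. if i = j then 1 else 0, H)"
proof -
  let ?N = "quotient_rep p H M"
  let ?g = "(\<lambda>_ _. 0, G) :: 'k kmor" and ?h = "(\<lambda>i j. if i = j then 1 else 0, H) :: 'k kmor"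
  have g1: "mor1 (aP0 a) M ?g x = 0" for x
    by (simp add: mor1_def aP0_def matapp_def fun_eq_iff)
  have g2: "mor2 (aP0 a) M ?g = matapp (dim2 M) a G"
    by (simp add: mor2_def aP0_def)
  have h1: "mor1 M ?N ?h x = x" if "x \<in> kvec (dim1 M)" for x
    using that by (simp add: mor1_def quotient_rep_def matapp_identity)
  have h2: "mor2 M ?N ?h = matapp p (dim2 M) H"
    by (simp add: mor2_def quotient_rep_def)
  have "is_morph r (aP0 a) M ?g"
    by (simp add: is_morph_def mor1_def mor2_def arrow_def aP0_def kvec_0 matapp_def fun_eq_iff)
  moreover have "is_morph r M ?N ?h"
    by (simp add: is_morph_def h1 h2 arrow_quotient_rep)
  moreover have "mor1 M ?N ?h ` kvec (dim1 M) = kvec (dim1 ?N)"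
    using h1 by (simp add: quotient_rep_def)
  moreover have "{x \<in> kvec (dim1 M). mor1 M ?N ?h x = 0} = {0}"
    using h1 by (auto simp: kvec_def)
  moreover have "dim1 (aP0 a :: 'k krep) = 0" and "dim2 (aP0 a :: 'k krep) = a"
    and "dim1 ?N = dim1 M" and "dim2 ?N = p"
    by (simp_all add: aP0_def quotient_rep_def)
  ultimately show ?thesis
    using G_inj G_img H_surj g1 unfolding short_exact_def g2 h2 by (simp add: kvec_0)
qed

lemma rep_proj_quotient_rep:
  fixes M :: "'k::field krep"
  assumes M: "rep_proj r d M"
    and ker: "\<And>V t. in_Gr r d V \<Longrightarrow> t \<in> tensor_sub M V \<Longrightarrow>
      matapp p (dim2 M) H (psi r M t) = 0 \<Longrightarrow> psi r M t = 0"
  shows "rep_proj r d (quotient_rep p H M)"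
  unfolding rep_proj_iff
proof (intro allI impI inj_onI)
  fix V :: "(nat \<Rightarrow> 'k) set" and t1 t2 assume V: "in_Gr r d V"
  have sub: "tensor_sub (quotient_rep p H M) V = tensor_sub M V"
    by (simp add: tensor_sub_def quotient_rep_def)
  assume t1: "t1 \<in> tensor_sub (quotient_rep p H M) V" and t2: "t2 \<in> tensor_sub (quotient_rep p H M) V"
    and eq: "psi r (quotient_rep p H M) t1 = psi r (quotient_rep p H M) t2"
  have diff: "t1 - t2 \<in> tensor_sub M V"
    using t1 t2 sub subspace_tensor_sub T.subspace_diff by metis
  have "matapp p (dim2 M) H (psi r M (t1 - t2)) = 0"
    using eq by (simp add: psi_quotient_rep additive.diff[OF additive_psi] additive.diff[OF additive_matapp])
  then have "psi r M t1 = psi r M t2"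
    using ker[OF V diff] by (simp add: additive.diff[OF additive_psi])
  then show "t1 = t2"
    using M V t1 t2 sub by (auto simp: rep_proj_iff inj_on_def)
qed

section \<open>Matrices of linear maps\<close>

definition unit_vec :: "nat \<Rightarrow> nat \<Rightarrow> 'k::field" where
  "unit_vec j l = (if l = j then 1 else 0)"

definition matrix_of :: "((nat \<Rightarrow> 'k::field) \<Rightarrow> nat \<Rightarrow> 'k) \<Rightarrow> nat \<Rightarrow> nat \<Rightarrow> 'k" where
  "matrix_of f i j = f (unit_vec j) i"

lemma kvec_eq_sum_unit_vec:
  assumes "x \<in> kvec N"
  shows "x = (\<Sum>j<N. sc (x j) (unit_vec j))"
proof
  fix l
  have "(\<Sum>j<N. sc (x j) (unit_vec j)) l = (\<Sum>j<N. if j = l then x l else 0)"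
    unfolding sum_apply by (intro sum.cong) (auto simp: unit_vec_def)
  then show "x l = (\<Sum>j<N. sc (x j) (unit_vec j)) l"
    using assms by (simp add: kvec_def)
qed

lemma matapp_matrix_of:
  fixes f :: "(nat \<Rightarrow> 'k::field) \<Rightarrow> nat \<Rightarrow> 'k"
  assumes f: "additive f" and f_sc: "\<And>c x. f (sc c x) = sc c (f x)" and f_kvec: "\<And>x. f x \<in> kvec P"
    and x: "x \<in> kvec N"
  shows "matapp P N (matrix_of f) x = f x"
proof
  fix i
  have "f x = (\<Sum>j<N. sc (x j) (f (unit_vec j)))"
    by (subst kvec_eq_sum_unit_vec[OF x]) (simp add: additive.sum[OF f] f_sc)
  then show "matapp P N (matrix_of f) x i = f x i"
    using f_kvec[of x] by (simp add: matapp_def matrix_of_def sum_apply kvec_def mult.commute)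
qed

lemma pivot_embedding:
  assumes pb: "pivot_basis U T w" and U: "V.subspace U" and tau: "bij_betw tau {..<a} T"
  defines "f \<equiv> \<lambda>y. \<Sum>k<a. sc (y k) (w (tau k))"
  shows "inj_on f (kvec a)" and "f ` kvec a = U"
proof -
  have finT: "finite T" and w: "\<And>s. s \<in> T \<Longrightarrow> w s \<in> U"
    and pivot: "\<forall>s\<in>T. \<forall>l\<in>T. w s l = (if l = s then 1 else 0)"
    using pb by (auto simp: pivot_basis_def)
  have inv: "inv_into {..<a} tau (tau k) = k" if "k < a" for k
    using tau that by (simp add: bij_betw_def inv_into_f_f)
  have comb: "f y = (\<Sum>s\<in>T. sc (y (inv_into {..<a} tau s)) (w s))" for y
    unfolding f_def sum.reindex_bij_betw[OF tau, symmetric] by (intro sum.cong) (simp_all add: inv)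
  have f_at: "f y (tau k) = y k" if "k < a" for y k
  proof -
    have "tau k \<in> T"
      using tau that by (auto simp: bij_betw_def)
    then show ?thesis
      using pivot_combination_apply[OF finT pivot, of "tau k"] by (simp add: comb inv[OF that])
  qed
  have coord_eq: "y k = y' k" if "y \<in> kvec a" "y' \<in> kvec a" "f y = f y'" for y y' k
  proof (cases "k < a")
    case True
    then show ?thesis
      using f_at[OF True, of y] f_at[OF True, of y'] \<open>f y = f y'\<close> by simp
  qed (use that in \<open>simp add: kvec_def\<close>)
  show "inj_on f (kvec a)"
    by (intro inj_onI ext) (rule coord_eq)
  have "f y \<in> U" for y
    unfolding f_def using w tau U by (intro V.subspace_sum V.subspace_scale) (auto simp: bij_betw_def)
  moreover have "x \<in> f ` kvec a" if "x \<in> U" for x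
  proof -
    have "inv_into {..<a} tau s < a" and "tau (inv_into {..<a} tau s) = s" if "s \<in> T" for s
      using tau that inv_into_into[of s tau "{..<a}"] f_inv_into_f[of s tau "{..<a}"]
      by (auto simp: bij_betw_def)
    then have "(\<Sum>s\<in>T. sc (x s) (w s)) = f (\<lambda>k. if k < a then x (tau k) else 0)"
      unfolding comb by (intro sum.cong) simp_all
    moreover have "x = (\<Sum>s\<in>T. sc (x s) (w s))"
      using pb \<open>x \<in> U\<close> by (simp add: pivot_basis_def)
    ultimately have "x = f (\<lambda>k. if k < a then x (tau k) else 0)"
      by simp
    then show ?thesis
      by (auto simp: kvec_def)
  qed
  ultimately show "f ` kvec a = U"
    by blast
qed

lemma exists_embedding_matrix:
  fixes U :: "(nat \<Rightarrow> 'k::field) set"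
  assumes U: "U \<subseteq> kvec n" "V.subspace U" "V.dim U = a"
  obtains G where "inj_on (matapp n a G) (kvec a)" and "matapp n a G ` kvec a = U"
proof -
  obtain T w where T: "T \<subseteq> {..<n}" and pb: "pivot_basis U T w" and card_T: "card T = a"
    using exists_pivot_basis[OF U(1,2)] U(3) by metis
  obtain tau where tau: "bij_betw tau {..<a} T"
    using ex_bij_betw_nat_finite[of T] T card_T finite_subset atLeast0LessThan by auto
  define f where "f = (\<lambda>y. \<Sum>k<a. sc (y k) (w (tau k)))"
  have "additive f"
    by unfold_locales (simp add: f_def sum.distrib V.scale_left_distrib)
  moreover have "f (sc c y) = sc c (f y)" for c y
    by (simp add: f_def V.scale_sum_right)
  moreover have "f y \<in> kvec n" for y
    unfolding f_def using pb tau U(1) subspace_kvec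
    by (intro V.subspace_sum V.subspace_scale) (auto simp: pivot_basis_def bij_betw_def)
  ultimately have G: "matapp n a (matrix_of f) y = f y" if "y \<in> kvec a" for y
    using that by (rule matapp_matrix_of)
  show ?thesis
  proof (rule that)
    show "inj_on (matapp n a (matrix_of f)) (kvec a)"
      using pivot_embedding(1)[OF pb U(2) tau, folded f_def] inj_on_cong[of "kvec a"] G by metis
    have "matapp n a (matrix_of f) ` kvec a = f ` kvec a"
      by (rule image_cong[OF refl]) (rule G)
    then show "matapp n a (matrix_of f) ` kvec a = U"
      using pivot_embedding(2)[OF pb U(2) tau, folded f_def] by simp
  qed
qed

lemma mem_iff_pivot_residual_zero:
  assumes U: "U \<subseteq> kvec n" "V.subspace U" and pb: "pivot_basis U T w" and T: "T \<subseteq> {..<n}"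
    and x: "x \<in> kvec n"
  shows "x \<in> U \<longleftrightarrow> (\<forall>l\<in>{..<n} - T. x l = (\<Sum>s\<in>T. x s * w s l))"
proof -
  have finT: "finite T" and pivot: "\<forall>s\<in>T. \<forall>l\<in>T. w s l = (if l = s then 1 else 0)"
    and w: "\<And>s. s \<in> T \<Longrightarrow> w s \<in> kvec n"
    using pb U(1) by (auto simp: pivot_basis_def)
  have on_T: "x l = (\<Sum>s\<in>T. x s * w s l)" if "l \<in> T" for l
    using pivot_combination_apply[OF finT pivot that, of x] by (simp add: sum_apply)
  have off_n: "x l = (\<Sum>s\<in>T. x s * w s l)" if "l \<ge> n" for l
    using x w that by (simp add: kvec_def)
  have "x \<in> U \<longleftrightarrow> (\<forall>l. x l = (\<Sum>s\<in>T. x s * w s l))"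
    unfolding pivot_basis_mem_iff[OF pb U(2)] fun_eq_iff by (simp add: sum_apply)
  also have "\<dots> \<longleftrightarrow> (\<forall>l\<in>{..<n} - T. x l = (\<Sum>s\<in>T. x s * w s l))"
    using on_T off_n by (metis Diff_iff lessThan_iff not_le)
  finally show ?thesis .
qed

lemma pivot_residual_projection:
  assumes U: "U \<subseteq> kvec n" "V.subspace U" and pb: "pivot_basis U T w" and T: "T \<subseteq> {..<n}"
    and kap: "bij_betw kap {..<m} ({..<n} - T)"
  defines "f \<equiv> \<lambda>x i. if i < m then x (kap i) - (\<Sum>s\<in>T. x s * w s (kap i)) else 0"
  shows "f ` kvec n = kvec m" and "x \<in> kvec n \<Longrightarrow> f x = 0 \<longleftrightarrow> x \<in> U"
proof -
  show "f x = 0 \<longleftrightarrow> x \<in> U" if x: "x \<in> kvec n"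
  proof -
    have "f x = 0 \<longleftrightarrow> (\<forall>i<m. x (kap i) = (\<Sum>s\<in>T. x s * w s (kap i)))"
      by (auto simp: f_def fun_eq_iff)
    also have "\<dots> \<longleftrightarrow> (\<forall>l\<in>kap ` {..<m}. x l = (\<Sum>s\<in>T. x s * w s l))"
      by auto
    also have "\<dots> \<longleftrightarrow> x \<in> U"
      using mem_iff_pivot_residual_zero[OF U pb T x] kap by (simp add: bij_betw_def)
    finally show ?thesis .
  qed
  have "y \<in> f ` kvec n" if y: "y \<in> kvec m" for y
  proof -
    define x where "x l = (if l \<in> {..<n} - T then y (inv_into {..<m} kap l) else 0)" for l
    have "x (kap i) = y i" if "i < m" for i
    proof -
      have "kap i \<in> {..<n} - T" and "inv_into {..<m} kap (kap i) = i"
        using kap that by (auto simp: bij_betw_def inv_into_f_f)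
      then show ?thesis
        by (simp add: x_def)
    qed
    then have "f x = y"
      using y by (auto simp: f_def x_def kvec_def fun_eq_iff)
    moreover have "x \<in> kvec n"
      by (simp add: x_def kvec_def)
    ultimately show ?thesis
      by blast
  qed
  moreover have "f x \<in> kvec m" for x
    by (simp add: f_def kvec_def)
  ultimately show "f ` kvec n = kvec m"
    by blast
qed

lemma exists_quotient_matrix:
  fixes U :: "(nat \<Rightarrow> 'k::field) set"
  assumes U: "U \<subseteq> kvec n" "V.subspace U" "V.dim U = a"
  obtains H where "matapp (n - a) n H ` kvec n = kvec (n - a)"
    and "\<And>x. x \<in> kvec n \<Longrightarrow> matapp (n - a) n H x = 0 \<longleftrightarrow> x \<in> U"
proof -
  obtain T w where T: "T \<subseteq> {..<n}" and pb: "pivot_basis U T w" and card_T: "card T = a"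
    using exists_pivot_basis[OF U(1,2)] U(3) by metis
  have "card ({..<n} - T) = n - a"
    using T card_T by (simp add: card_Diff_subset finite_subset)
  then obtain kap where kap: "bij_betw kap {..<n - a} ({..<n} - T)"
    using ex_bij_betw_nat_finite[of "{..<n} - T"] atLeast0LessThan by auto
  define f where "f = (\<lambda>x i. if i < n - a then x (kap i) - (\<Sum>s\<in>T. x s * w s (kap i)) else 0)"
  have "additive f"
    by unfold_locales (simp add: f_def fun_eq_iff sum.distrib algebra_simps)
  moreover have "f (sc c x) = sc c (f x)" for c x
    by (simp add: f_def fun_eq_iff sum_distrib_left algebra_simps)
  moreover have "f x \<in> kvec (n - a)" for x
    by (simp add: f_def kvec_def)
  ultimately have H: "matapp (n - a) n (matrix_of f) x = f x" if "x \<in> kvec n" for x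
    using that by (rule matapp_matrix_of)
  show ?thesis
  proof (rule that)
    have "matapp (n - a) n (matrix_of f) ` kvec n = f ` kvec n"
      by (rule image_cong[OF refl]) (rule H)
    then show "matapp (n - a) n (matrix_of f) ` kvec n = kvec (n - a)"
      using pivot_residual_projection(1)[OF U(1,2) pb T kap, folded f_def] by simp
    show "matapp (n - a) n (matrix_of f) x = 0 \<longleftrightarrow> x \<in> U" if "x \<in> kvec n" for x
      using pivot_residual_projection(2)[OF U(1,2) pb T kap that] H[OF that] unfolding f_def by simp
  qed
qed

lemma exists_transversal_subspace:
  fixes M :: "'k::alg_closed_field krep"
  assumes "d \<le> r" and "d * (r - d) + d * dim1 M + a \<le> dim2 M"
  obtains U where "U \<subseteq> kvec (dim2 M)" and "V.subspace U" and "V.dim U = a"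
    and "transversal r d M U"
proof -
  obtain Us where "Us \<subseteq> kvec (dim2 M)" and "V.independent Us" and "card Us = a"
    and "transversal r d M (V.span Us)"
    using exists_transversal_independent_set[OF assms] by blast
  moreover have "V.span Us \<subseteq> kvec (dim2 M)"
    using V.span_minimal[OF _ subspace_kvec] \<open>Us \<subseteq> kvec (dim2 M)\<close> by blast
  moreover have "V.dim (V.span Us) = a"
    using V.dim_span_eq_card_independent[OF \<open>V.independent Us\<close>] \<open>card Us = a\<close> by simp
  ultimately show ?thesis
    using that V.subspace_span by blast
qed

lemma exists_short_exact_quotient:
  fixes M :: "'k::field krep"
  assumes M: "rep_proj r d M" and U: "U \<subseteq> kvec (dim2 M)" "V.subspace U" "V.dim U = a"
    and tr: "transversal r d M U"
  obtains Mmin g h where "short_exact r (aP0 a) M Mmin g h" and "rep_proj r d Mmin"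
    and "dim1 Mmin = dim1 M" and "dim2 Mmin = dim2 M - a"
proof -
  obtain G where G: "inj_on (matapp (dim2 M) a G) (kvec a)" "matapp (dim2 M) a G ` kvec a = U"
    by (rule exists_embedding_matrix[OF U])
  obtain H where H: "matapp (dim2 M - a) (dim2 M) H ` kvec (dim2 M) = kvec (dim2 M - a)"
    "\<And>x. x \<in> kvec (dim2 M) \<Longrightarrow> matapp (dim2 M - a) (dim2 M) H x = 0 \<longleftrightarrow> x \<in> U"
    by (rule exists_quotient_matrix[OF U]) (rule that)
  show ?thesis
  proof (rule that)
    show "short_exact r (aP0 a) M (quotient_rep (dim2 M - a) H M) (\<lambda>_ _. 0, G)
        (\<lambda>i j. if i = j then 1 else 0, H)"
      using G H U(1) by (intro short_exact_quotient_rep) auto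
    show "rep_proj r d (quotient_rep (dim2 M - a) H M)"
      using M tr H(2)[OF psi_kvec] unfolding transversal_def by (intro rep_proj_quotient_rep) blast+
  qed (simp_all add: quotient_rep_def)
qed

theorem proposition2p3p5:
  fixes r d :: nat and M :: "'k::alg_closed_field krep"
  assumes "r \<ge> 2" and "1 \<le> d" and "d \<le> r - 1"
    and "rep_proj r d M"
    and "Delta M d > int d * (int r - int d)"
  shows "\<exists>a::nat. a > 0 \<and> (\<exists>Mmin :: 'k krep. \<exists>g h.
           short_exact r (aP0 a) M Mmin g h \<and>
           rep_proj r d Mmin \<and> Delta Mmin d = int d * (int r - int d))"
proof -
  have "d \<le> r"
    using assms(3) by simp
  then have gap: "int d * (int r - int d) = int (d * (r - d))"
    by (simp add: of_nat_diff)
  define a where "a = dim2 M - (d * (r - d) + d * dim1 M)"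
  have "int (d * (r - d) + d * dim1 M) < int (dim2 M)"
    using assms(5) unfolding Delta_def gap by simp
  then have dim: "d * (r - d) + d * dim1 M + a = dim2 M" and "a > 0"
    unfolding a_def of_nat_less_iff by simp_all
  obtain U where "U \<subseteq> kvec (dim2 M)" "V.subspace U" "V.dim U = a" "transversal r d M U"
    using exists_transversal_subspace[OF \<open>d \<le> r\<close>] dim by (metis order.refl)
  then obtain Mmin g h where "short_exact r (aP0 a) M Mmin g h" "rep_proj r d Mmin"
    and "dim1 Mmin = dim1 M" "dim2 Mmin = dim2 M - a"
    using exists_short_exact_quotient[OF assms(4)] by metis
  moreover have "dim2 Mmin = d * (r - d) + d * dim1 Mmin"
    using dim \<open>dim1 Mmin = dim1 M\<close> \<open>dim2 Mmin = dim2 M - a\<close> by simp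
  then have "Delta Mmin d = int d * (int r - int d)"
    unfolding Delta_def gap by simp
  ultimately show ?thesis
    using \<open>a > 0\<close> by blast
qed

end
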